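(* Let $\alpha<\beta$ be real and let $T$ be an operator function on $[\alpha,\beta]$ satisfying (A1)–(A3), continuous in the norm resolvent sense, with each $T(\lambda)$ bounded from below, such that $\alpha,\beta\in\rho(T)$ and $\sigma(T)\cap(\alpha,\beta)$ is a finite subset of $\sigma_{dis}(T)$. Let $a,b\in[\alpha,\beta]$ with $a<b$, and let $\mathcal H_1\subset\mathcal D$ be a closed subspace of $\mathcal H$ with $\mathfrak t(a)[x]\le0$ for all $x\in\mathcal H_1$. Assume $(0,\delta)\subset\rho(T(b))$ for some $\delta>0$. Then the sums $\mathcal H_1+\mathcal L_{(0,\infty)}(T(b))$ and $\mathcal H_1+\mathcal L_{[0,\infty)}(T(b))$ are direct and closed.
   Context: For a self-adjoint operator $A$ with spectral measure $E$, $\mathcal L_\Delta(A):=\mathrm{ran}\,E(\Delta)$; its form is $\mathfrak a[x,y]=\int\mu\,d\langle E(\mu)x,y\rangle$ on $\mathrm{dom}(|A|^{1/2})$, $\mathfrak a[x]:=\mathfrak a[x,x]$. For an operator function $T$: $\sigma(T)=\{\lambda:0\in\sigma(T(\lambda))\}$, $\rho(T)=\{\lambda:0\in\rho(T(\lambda))\}$, $\sigma_{ess}(T)=\{\lambda: T(\lambda)\text{ not Fredholm}\}$, $\sigma_{dis}(T)=\sigma(T)\setminus\sigma_{ess}(T)$. (A1) $T(\lambda)$ self-adjoint, with form $\mathfrak t(\lambda)$; (A2) $\mathrm{dom}\,\mathfrak t(\lambda)=:\mathcal D$ independent of $\lambda$; (A3) for each $x\in\mathcal D\setminus\{0\}$,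 $\lambda\mapsto\mathfrak t(\lambda)[x]$ is continuous, and if $\mathfrak t(\lambda_0)[x]=0$ then $\mathfrak t(\lambda)[x]>0$ for $\lambda<\lambda_0$ and $<0$ for $\lambda>\lambda_0$. *)

theory Defs
  imports "HOL-Analysis.Analysis"
begin

text \<open>A complex Hilbert space is encoded as a real Hilbert space (real inner product
  = real part of the complex inner product) together with the multiplication by the
  imaginary unit, iscale, which is real-linear, squares to minus the identity and is
  orthogonal.\<close>

class complex_hilbert = real_inner + complete_space +
  fixes iscale :: "'a \<Rightarrow> 'a"
  assumes iscale_add: "iscale (x + y) = iscale x + iscale y"
    and iscale_scaleR: "iscale (r *\<^sub>R x) = r *\<^sub>R iscale x"
    and iscale_iscale: "iscale (iscale x) = - x"
    and inner_iscale: "inner (iscale x) (iscale y) = inner x y"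

definition cscale :: "complex \<Rightarrow> 'h::complex_hilbert \<Rightarrow> 'h" where
  "cscale z x = Re z *\<^sub>R x + Im z *\<^sub>R iscale x"

definition csubspace :: "'h::complex_hilbert set \<Rightarrow> bool" where
  "csubspace S \<longleftrightarrow> subspace S \<and> iscale ` S \<subseteq> S"

type_synonym 'h op = "'h set \<times> ('h \<Rightarrow> 'h)"

definition clinear_op :: "'h::complex_hilbert op \<Rightarrow> bool" where
  "clinear_op T \<longleftrightarrow> csubspace (fst T) \<and>
     (\<forall>x\<in>fst T. \<forall>y\<in>fst T. snd T (x + y) = snd T x + snd T y) \<and>
     (\<forall>x\<in>fst T. \<forall>r. snd T (r *\<^sub>R x) = r *\<^sub>R snd T x) \<and>
     (\<forall>x\<in>fst T. snd T (iscale x) = iscale (snd T x))"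

text \<open>For complex-linear operators the complex adjoint relation is equivalent to the
  relation for the real parts of the inner products, which is what is written.\<close>

definition self_adjoint_op :: "'h::complex_hilbert op \<Rightarrow> bool" where
  "self_adjoint_op T \<longleftrightarrow> clinear_op T \<and> closure (fst T) = UNIV \<and>
     (\<forall>y. y \<in> fst T \<longleftrightarrow> (\<exists>z. \<forall>x\<in>fst T. inner (snd T x) y = inner x z)) \<and>
     (\<forall>x\<in>fst T. \<forall>y\<in>fst T. inner (snd T x) y = inner x (snd T y))"

definition bounded_below_op :: "'h::complex_hilbert op \<Rightarrow> bool" where
  "bounded_below_op T \<longleftrightarrow> (\<exists>c. \<forall>x\<in>fst T. c * (norm x)\<^sup>2 \<le> inner (snd T x) x)"

definition resolvent_inv :: "'h::complex_hilbert op \<Rightarrow> complex \<Rightarrow> ('h \<Rightarrow> 'h) \<Rightarrow> bool" where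
  "resolvent_inv T z B \<longleftrightarrow> bounded_linear B \<and>
     (\<forall>y. B y \<in> fst T \<and> snd T (B y) - cscale z (B y) = y) \<and>
     (\<forall>x\<in>fst T. B (snd T x - cscale z x) = x)"

definition in_rho_op :: "'h::complex_hilbert op \<Rightarrow> complex \<Rightarrow> bool" where
  "in_rho_op T z \<longleftrightarrow> (\<exists>B. resolvent_inv T z B)"

definition resolvent_op :: "'h::complex_hilbert op \<Rightarrow> complex \<Rightarrow> 'h \<Rightarrow> 'h" where
  "resolvent_op T z = (SOME B. resolvent_inv T z B)"

definition fredholm_op :: "'h::complex_hilbert op \<Rightarrow> bool" where
  "fredholm_op T \<longleftrightarrow> closed (snd T ` fst T) \<and>
     (\<exists>F. finite F \<and> {x\<in>fst T. snd T x = 0} \<subseteq> span F) \<and>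
     (\<exists>F. finite F \<and> span (snd T ` fst T \<union> F) = UNIV)"

definition is_pvm :: "(real set \<Rightarrow> 'h::complex_hilbert \<Rightarrow> 'h) \<Rightarrow> bool" where
  "is_pvm E \<longleftrightarrow>
     (\<forall>S\<in>sets (borel::real measure). bounded_linear (E S) \<and>
        (\<forall>x. E S (E S x) = E S x) \<and> (\<forall>x y. inner (E S x) y = inner x (E S y)) \<and>
        (\<forall>x. E S (iscale x) = iscale (E S x))) \<and>
     (\<forall>x. E UNIV x = x) \<and>
     (\<forall>S\<in>sets (borel::real measure). \<forall>S'\<in>sets (borel::real measure).
        \<forall>x. E (S \<inter> S') x = E S (E S' x)) \<and>
     (\<forall>F. range F \<subseteq> sets (borel::real measure) \<longrightarrow> disjoint_family F \<longrightarrow>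
        (\<forall>x. (\<lambda>n. \<Sum>i<n. E (F i) x) \<longlonglongrightarrow> E (\<Union>i. F i) x))"

definition spec_meas :: "(real set \<Rightarrow> 'h::complex_hilbert \<Rightarrow> 'h) \<Rightarrow> 'h \<Rightarrow> real measure" where
  "spec_meas E x = measure_of UNIV (sets borel) (\<lambda>S. ennreal (inner (E S x) x))"

text \<open>E is the spectral measure of the self-adjoint operator T, i.e. T = \<integral> \<mu> dE(\<mu>):
  the domain is {x. \<integral> \<mu>^2 d<E x,x> < \<infinity>} and the quadratic forms agree
  (for self-adjoint T this determines T by polarization).\<close>

definition is_spectral_measure_of :: "'h::complex_hilbert op \<Rightarrow> (real set \<Rightarrow> 'h \<Rightarrow> 'h) \<Rightarrow> bool" where
  "is_spectral_measure_of T E \<longleftrightarrow> is_pvm E \<and>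
     fst T = {x. integrable (spec_meas E x) (\<lambda>t. t\<^sup>2)} \<and>
     (\<forall>x\<in>fst T. inner (snd T x) x = integral\<^sup>L (spec_meas E x) (\<lambda>t. t))"

text \<open>Form domain dom(|A|^(1/2)) and form value a[x] = \<integral> \<mu> d<E(\<mu>)x,x>.\<close>

definition form_dom :: "(real set \<Rightarrow> 'h::complex_hilbert \<Rightarrow> 'h) \<Rightarrow> 'h set" where
  "form_dom E = {x. integrable (spec_meas E x) (\<lambda>t. t)}"

definition form_val :: "(real set \<Rightarrow> 'h::complex_hilbert \<Rightarrow> 'h) \<Rightarrow> 'h \<Rightarrow> real" where
  "form_val E x = integral\<^sup>L (spec_meas E x) (\<lambda>t. t)"

definition spec_subspace :: "(real set \<Rightarrow> 'h::complex_hilbert \<Rightarrow> 'h) \<Rightarrow> real set \<Rightarrow> 'h set" where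
  "spec_subspace E \<Delta> = range (E \<Delta>)"

definition opf_spectrum :: "(real \<Rightarrow> 'h::complex_hilbert op) \<Rightarrow> real set \<Rightarrow> real set" where
  "opf_spectrum T I = {l\<in>I. \<not> in_rho_op (T l) 0}"

definition opf_rho :: "(real \<Rightarrow> 'h::complex_hilbert op) \<Rightarrow> real set \<Rightarrow> real set" where
  "opf_rho T I = {l\<in>I. in_rho_op (T l) 0}"

definition opf_ess :: "(real \<Rightarrow> 'h::complex_hilbert op) \<Rightarrow> real set \<Rightarrow> real set" where
  "opf_ess T I = {l\<in>I. \<not> fredholm_op (T l)}"

definition opf_dis :: "(real \<Rightarrow> 'h::complex_hilbert op) \<Rightarrow> real set \<Rightarrow> real set" where
  "opf_dis T I = opf_spectrum T I - opf_ess T I"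

definition norm_resolvent_continuous :: "(real \<Rightarrow> 'h::complex_hilbert op) \<Rightarrow> real set \<Rightarrow> bool" where
  "norm_resolvent_continuous T I \<longleftrightarrow>
     (\<forall>z. Im z \<noteq> 0 \<longrightarrow> (\<forall>l\<in>I. in_rho_op (T l) z) \<and>
        (\<forall>l0\<in>I. ((\<lambda>l. onorm (\<lambda>x. resolvent_op (T l) z x - resolvent_op (T l0) z x))
                    \<longlongrightarrow> 0) (at l0 within I)))"

end

theory Submission
  imports Defs
begin

text \<open>For x \<in> H1 - {0}, condition (A3) and t(a)[x] \<le> 0 force t(b)[x] < 0, whereas the form of
  T(b) is nonnegative on L[0,\<infinity>)(T(b)); hence both sums are direct. For closedness, T(b) being
  bounded below with the gap (0,\<delta>) gives t(b)[x] \<ge> m |E(-\<infinity>,0) x|^2 + \<delta> |E(0,\<infinity>) x|^2,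
  so on H1 the positive part of x is dominated by its negative part. The kernel L{0}(T(b)) is
  finite-dimensional (0 is in the resolvent set or in the discrete spectrum) and meets H1 only
  in 0, so its unit sphere has positive distance from H1. Together, |E(-\<infinity>,0) x| \<ge> c |x| on H1;
  hence the complementary spectral projection P has closed range on H1, and the sum is the
  preimage of P H1 under P.\<close>

section \<open>Projection-valued measures\<close>

locale projection_valued_measure =
  fixes E :: "real set \<Rightarrow> 'h::complex_hilbert \<Rightarrow> 'h"
  assumes pvm: "is_pvm E"
begin

lemma E_bounded_linear: "S \<in> sets borel \<Longrightarrow> bounded_linear (E S)"
  using pvm unfolding is_pvm_def by blast

lemma E_idem: "S \<in> sets borel \<Longrightarrow> E S (E S x) = E S x"
  using pvm unfolding is_pvm_def by blast

lemma E_self_adjoint: "S \<in> sets borel \<Longrightarrow> inner (E S x) y = inner x (E S y)"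
  using pvm unfolding is_pvm_def by blast

lemma E_UNIV: "E UNIV x = x"
  using pvm unfolding is_pvm_def by blast

lemma E_Int: "A \<in> sets borel \<Longrightarrow> B \<in> sets borel \<Longrightarrow> E (A \<inter> B) x = E A (E B x)"
  using pvm unfolding is_pvm_def by blast

lemma E_countably_additive:
  "range F \<subseteq> sets borel \<Longrightarrow> disjoint_family F \<Longrightarrow> (\<lambda>n. \<Sum>i<n. E (F i) x) \<longlonglongrightarrow> E (\<Union>i. F i) x"
  using pvm unfolding is_pvm_def by blast

lemma E_add: "S \<in> sets borel \<Longrightarrow> E S (x + y) = E S x + E S y"
  using linear_add[OF bounded_linear.linear[OF E_bounded_linear]] by blast

lemma E_diff: "S \<in> sets borel \<Longrightarrow> E S (x - y) = E S x - E S y"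
  using linear_diff[OF bounded_linear.linear[OF E_bounded_linear]] by blast

lemma E_scaleR: "S \<in> sets borel \<Longrightarrow> E S (r *\<^sub>R x) = r *\<^sub>R E S x"
  using linear_scale[OF bounded_linear.linear[OF E_bounded_linear]] by blast

lemma E_zero: "S \<in> sets borel \<Longrightarrow> E S 0 = 0"
  using linear_0[OF bounded_linear.linear[OF E_bounded_linear]] by blast

lemma E_empty: "E {} x = 0"
proof -
  have L: "(\<lambda>n. \<Sum>i<n. E {} x) \<longlonglongrightarrow> E {} x"
    using E_countably_additive[of "\<lambda>i::nat. {}" x] by (simp add: disjoint_family_on_def)
  have "(\<lambda>n. (\<Sum>i<Suc n. E {} x) - (\<Sum>i<n. E {} x)) \<longlonglongrightarrow> E {} x - E {} x"
    by (intro tendsto_diff L LIMSEQ_Suc[OF L])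
  then have "(\<lambda>n. E {} x) \<longlonglongrightarrow> 0" by simp
  then show ?thesis using LIMSEQ_unique tendsto_const by blast
qed

lemma E_Un:
  assumes A: "A \<in> sets borel" and B: "B \<in> sets borel" and disj: "A \<inter> B = {}"
  shows "E (A \<union> B) x = E A x + E B x"
proof -
  define F where "F = (\<lambda>i::nat. if i = 0 then A else if i = 1 then B else {})"
  have "(\<lambda>n. \<Sum>i<n. E (F i) x) \<longlonglongrightarrow> E (\<Union>i. F i) x"
    by (rule E_countably_additive) (use A B disj in \<open>auto simp: F_def disjoint_family_on_def\<close>)
  moreover have "(\<Union>i. F i) = A \<union> B"
    unfolding F_def by (auto split: if_splits)
  ultimately have L: "(\<lambda>n. \<Sum>i<n. E (F i) x) \<longlonglongrightarrow> E (A \<union> B) x" by simp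
  have partial_sums: "(\<Sum>i<n+2. E (F i) x) = E A x + E B x" for n
    by (induction n) (auto simp: F_def E_empty)
  have "(\<lambda>n. \<Sum>i<n+2. E (F i) x) \<longlonglongrightarrow> E (A \<union> B) x"
    using LIMSEQ_ignore_initial_segment[OF L, of 2] by (simp del: sum.lessThan_Suc)
  then have "(\<lambda>n. E A x + E B x) \<longlonglongrightarrow> E (A \<union> B) x" by (simp only: partial_sums)
  then show ?thesis using LIMSEQ_unique tendsto_const by blast
qed

lemma E_Compl: "S \<in> sets borel \<Longrightarrow> E (- S) x = x - E S x"
  using E_Un[of S "-S" x] by (simp add: E_UNIV borel_comp algebra_simps)

lemma E_disjoint_eq_0:
  "A \<in> sets borel \<Longrightarrow> B \<in> sets borel \<Longrightarrow> A \<inter> B = {} \<Longrightarrow> E A (E B x) = 0"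
  using E_Int[of A B x] by (simp add: E_empty)

lemma norm_E_sq: "S \<in> sets borel \<Longrightarrow> (norm (E S x))\<^sup>2 = inner (E S x) x"
  by (metis E_idem E_self_adjoint power2_norm_eq_inner)

lemma norm_E_le: "S \<in> sets borel \<Longrightarrow> norm (E S x) \<le> norm x"
proof -
  assume S: "S \<in> sets borel"
  have "(norm (E S x))\<^sup>2 \<le> norm (E S x) * norm x"
    using norm_E_sq[OF S, of x] Cauchy_Schwarz_ineq2[of "E S x" x] by simp
  then show ?thesis
    by (metis mult_le_cancel_left_pos norm_ge_zero not_le power2_eq_square zero_less_norm_iff
         le_less mult_zero_left order_le_less_trans)
qed

abbreviation \<mu> :: "'h \<Rightarrow> real measure" where "\<mu> x \<equiv> spec_meas E x"

lemma sets_\<mu> [simp]: "sets (\<mu> x) = sets borel"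
proof -
  have "sets (\<mu> x) = sigma_sets UNIV (sets borel)"
    unfolding spec_meas_def by (rule sets_measure_of) simp
  also have "\<dots> = sets borel"
    using sets.sigma_sets_eq[of borel] by simp
  finally show ?thesis .
qed

lemma space_\<mu> [simp]: "space (\<mu> x) = UNIV"
  by (simp add: spec_meas_def)

lemma borel_measurable_\<mu>: "f \<in> borel_measurable borel \<Longrightarrow> f \<in> borel_measurable (\<mu> x)"
  using measurable_cong_sets[OF sets_\<mu> refl] by blast

lemma emeasure_\<mu>:
  assumes A: "A \<in> sets borel"
  shows "emeasure (\<mu> x) A = ennreal ((norm (E A x))\<^sup>2)"
proof -
  have "emeasure (\<mu> x) A = ennreal (inner (E A x) x)"
    unfolding spec_meas_def
  proof (rule emeasure_measure_of_sigma[OF _ _ _ A])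
    show "sigma_algebra UNIV (sets borel)"
      using sets.sigma_algebra_axioms[of borel] by simp
    show "positive (sets borel) (\<lambda>S. ennreal (inner (E S x) x))"
      by (simp add: positive_def E_empty)
    show "countably_additive (sets borel) (\<lambda>S. ennreal (inner (E S x) x))"
      unfolding countably_additive_def
    proof (intro allI impI)
      fix F :: "nat \<Rightarrow> real set"
      assume F: "range F \<subseteq> sets borel" "disjoint_family F" "\<Union> (range F) \<in> sets borel"
      have "(\<lambda>n. inner (\<Sum>i<n. E (F i) x) x) \<longlonglongrightarrow> inner (E (\<Union>i. F i) x) x"
        by (intro tendsto_inner E_countably_additive F tendsto_const)
      then have sums: "(\<lambda>i. inner (E (F i) x) x) sums inner (E (\<Union>i. F i) x) x"
        unfolding sums_def by (simp add: inner_sum_left)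
      have nonneg: "0 \<le> inner (E (F i) x) x" for i
        using F(1) norm_E_sq[of "F i" x] by (metis rangeI subsetD zero_le_power2)
      show "(\<Sum>i. ennreal (inner (E (F i) x) x)) = ennreal (inner (E (\<Union> (range F)) x) x)"
        using suminf_ennreal2[OF nonneg sums_summable[OF sums]] sums_unique[OF sums] by simp
    qed
  qed
  then show ?thesis using norm_E_sq[OF A] by simp
qed

lemma finite_measure_\<mu>: "finite_measure (\<mu> x)"
  by (rule finite_measureI) (simp add: emeasure_\<mu>[of UNIV])

lemma measure_\<mu>: "A \<in> sets borel \<Longrightarrow> measure (\<mu> x) A = (norm (E A x))\<^sup>2"
  by (simp add: measure_def emeasure_\<mu>)

lemma measure_\<mu>_space: "measure (\<mu> x) (space (\<mu> x)) = (norm x)\<^sup>2"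
  using measure_\<mu>[of UNIV x] by (simp add: E_UNIV)

lemma E_eq_0_iff_null_set: "A \<in> sets borel \<Longrightarrow> E A x = 0 \<longleftrightarrow> A \<in> null_sets (\<mu> x)"
  using emeasure_\<mu>[of A x] by (simp add: null_sets_def)

lemma AE_\<mu>_notin:
  assumes "S \<in> sets borel" and "E S x = 0"
  shows "AE t in \<mu> x. t \<notin> S"
  using assms by (intro AE_I'[of S]) (auto simp: E_eq_0_iff_null_set)

lemma \<mu>_E_eq_density:
  assumes S: "S \<in> sets borel"
  shows "\<mu> (E S x) = density (\<mu> x) (\<lambda>t. ennreal (indicator S t))"
proof (rule measure_eqI)
  show "sets (\<mu> (E S x)) = sets (density (\<mu> x) (\<lambda>t. ennreal (indicator S t)))" by simp
  fix A assume "A \<in> sets (\<mu> (E S x))"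
  then have A: "A \<in> sets borel" by simp
  have "emeasure (density (\<mu> x) (\<lambda>t. ennreal (indicator S t))) A
      = (\<integral>\<^sup>+ t. ennreal (indicator S t) * indicator A t \<partial>\<mu> x)"
    using A S by (subst emeasure_density) (auto intro: borel_measurable_\<mu>)
  also have "\<dots> = (\<integral>\<^sup>+ t. indicator (A \<inter> S) t \<partial>\<mu> x)"
    by (intro nn_integral_cong) (simp split: split_indicator)
  also have "\<dots> = emeasure (\<mu> x) (A \<inter> S)"
    using A S by (subst nn_integral_indicator) auto
  also have "\<dots> = emeasure (\<mu> (E S x)) A"
    using A S by (simp add: emeasure_\<mu> E_Int)
  finally show "emeasure (\<mu> (E S x)) A = emeasure (density (\<mu> x) (\<lambda>t. ennreal (indicator S t))) A" ..
qed

lemma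
  assumes S: "S \<in> sets borel" and f: "f \<in> borel_measurable borel"
  shows integral_\<mu>_E: "integral\<^sup>L (\<mu> (E S x)) (f :: real \<Rightarrow> real) = (\<integral>t. indicator S t * f t \<partial>\<mu> x)"
    and integrable_\<mu>_E: "integrable (\<mu> (E S x)) f \<longleftrightarrow> integrable (\<mu> x) (\<lambda>t. indicator S t * f t)"
proof -
  have ind: "(indicator S :: real \<Rightarrow> real) \<in> borel_measurable (\<mu> x)"
    using S by (intro borel_measurable_\<mu>) simp
  have nonneg: "AE t in \<mu> x. 0 \<le> (indicator S t :: real)" by simp
  show "integral\<^sup>L (\<mu> (E S x)) f = (\<integral>t. indicator S t * f t \<partial>\<mu> x)"
    unfolding \<mu>_E_eq_density[OF S]
    using integral_density[OF borel_measurable_\<mu>[OF f] ind nonneg] by (simp only: real_scaleR_def)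
  show "integrable (\<mu> (E S x)) f \<longleftrightarrow> integrable (\<mu> x) (\<lambda>t. indicator S t * f t)"
    unfolding \<mu>_E_eq_density[OF S]
    using integrable_density[OF borel_measurable_\<mu>[OF f] ind nonneg] by (simp only: real_scaleR_def)
qed

lemma form_val_E_0: "E {0} k = k \<Longrightarrow> form_val E k = 0"
proof -
  assume k: "E {0} k = k"
  have "AE t in \<mu> k. t \<notin> -{0}"
    using E_Compl[of "{0}" k] k by (intro AE_\<mu>_notin) auto
  then have "integral\<^sup>L (\<mu> k) (\<lambda>t. t) = integral\<^sup>L (\<mu> k) (\<lambda>t. 0)"
    by (intro integral_cong_AE) (auto intro: borel_measurable_\<mu>)
  then show ?thesis by (simp add: form_val_def)
qed

lemma norm_diff_E_0_sq:
  "(norm (x - E {0} x))\<^sup>2 = (norm (E {..<0} x))\<^sup>2 + (norm (E {0<..} x))\<^sup>2"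
proof -
  have disj: "{..<(0::real)} \<inter> {0<..} = {}" by auto
  have "- {0::real} = {..<0} \<union> {0<..}" by auto
  then have "x - E {0} x = E {..<0} x + E {0<..} x"
    using E_Compl[of "{0}" x] E_Un[OF _ _ disj, of x] by simp
  moreover have "orthogonal (E {..<0} x) (E {0<..} x)"
    unfolding orthogonal_def using E_self_adjoint E_disjoint_eq_0[OF _ _ disj] by simp
  ultimately show ?thesis by (simp add: norm_add_Pythagorean)
qed

text \<open>The sum is the preimage under the projection E(-S) of the image of H,
  which is closed when E(-S) is bounded below on H.\<close>

lemma closed_sum_range_E:
  assumes S: "S \<in> sets borel" and H: "subspace H" "closed H"
    and c: "c > 0" "\<forall>x\<in>H. c * norm x \<le> norm (E (-S) x)"
  shows "closed {x + y |x y. x \<in> H \<and> y \<in> range (E S)}"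
proof -
  have cS: "-S \<in> sets borel" using S by (rule borel_comp)
  define Q where "Q = E (-S)"
  have Q: "bounded_linear Q" unfolding Q_def by (rule E_bounded_linear[OF cS])
  have eq: "{x + y |x y. x \<in> H \<and> y \<in> range (E S)} = Q -` (Q ` H)"
  proof (intro set_eqI iffI)
    fix z assume "z \<in> {x + y |x y. x \<in> H \<and> y \<in> range (E S)}"
    then obtain x y where "z = x + E S y" "x \<in> H" by blast
    then show "z \<in> Q -` (Q ` H)"
      using E_disjoint_eq_0[OF cS S] E_add[OF cS] by (auto simp: Q_def)
  next
    fix z assume "z \<in> Q -` (Q ` H)"
    then obtain x where x: "x \<in> H" "Q z = Q x" by blast
    then have "E S (z - x) = z - x"
      using E_Compl[OF S, of "z - x"] E_diff[OF cS] by (simp add: Q_def)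
    then have "z = x + E S (z - x)" by simp
    with x(1) show "z \<in> {x + y |x y. x \<in> H \<and> y \<in> range (E S)}" by blast
  qed
  have "complete (Q ` H)"
    using complete_isometric_image[OF c(1) H(1) Q] c(2) H(2) complete_eq_closed
    unfolding Q_def by blast
  then have "closed (Q -` (Q ` H))"
    by (intro continuous_closed_vimage complete_imp_closed linear_continuous_at[OF Q])
  then show ?thesis unfolding eq .
qed

end

section \<open>Self-adjoint operators and their spectral subspaces\<close>

locale symmetric_on_subspace =
  fixes V :: "'a::real_inner set" and A :: "'a \<Rightarrow> 'a"
  assumes subspace: "subspace V"
    and maps_to: "\<And>u. u \<in> V \<Longrightarrow> A u \<in> V"
    and add: "\<And>u v. u \<in> V \<Longrightarrow> v \<in> V \<Longrightarrow> A (u + v) = A u + A v"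
    and scaleR: "\<And>u r. u \<in> V \<Longrightarrow> A (r *\<^sub>R u) = r *\<^sub>R A u"
    and symmetric: "\<And>u v. u \<in> V \<Longrightarrow> v \<in> V \<Longrightarrow> inner (A u) v = inner u (A v)"
begin

lemma diff: "u \<in> V \<Longrightarrow> v \<in> V \<Longrightarrow> A (u - v) = A u - A v"
  using add[of u "(-1) *\<^sub>R v"] scaleR[of v "-1"] subspace
  by (simp add: subspace_neg)

lemma polarization_bound:
  assumes bound: "\<And>u. u \<in> V \<Longrightarrow> \<bar>inner (A u) u\<bar> \<le> e * (norm u)\<^sup>2"
    and x: "x \<in> V" and v: "v \<in> V"
  shows "4 * inner (A x) v \<le> 2 * e * ((norm x)\<^sup>2 + (norm v)\<^sup>2)"
proof -
  have xv: "x + v \<in> V" "x - v \<in> V" using x v subspace by (auto simp: subspace_add subspace_diff)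
  have "inner (A v) x = inner (A x) v"
    using symmetric[OF v x] by (simp add: inner_commute)
  then have "inner (A (x + v)) (x + v) - inner (A (x - v)) (x - v) = 4 * inner (A x) v"
    unfolding add[OF x v] diff[OF x v] by (simp add: inner_add inner_diff algebra_simps)
  moreover have "inner (A (x + v)) (x + v) \<le> e * (norm (x + v))\<^sup>2"
    and "- inner (A (x - v)) (x - v) \<le> e * (norm (x - v))\<^sup>2"
    using bound[OF xv(1)] bound[OF xv(2)] by linarith+
  ultimately have "4 * inner (A x) v \<le> e * ((norm (x + v))\<^sup>2 + (norm (x - v))\<^sup>2)"
    by (simp add: distrib_left)
  also have "\<dots> = 2 * e * ((norm x)\<^sup>2 + (norm v)\<^sup>2)"
    unfolding power2_norm_eq_inner by (simp add: inner_add inner_diff algebra_simps)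
  finally show ?thesis .
qed

lemma norm_bound:
  assumes bound: "\<And>u. u \<in> V \<Longrightarrow> \<bar>inner (A u) u\<bar> \<le> e * (norm u)\<^sup>2"
    and e: "0 \<le> e" and x: "x \<in> V"
  shows "norm (A x) \<le> e * norm x"
proof (cases "A x = 0")
  case True
  then show ?thesis using e by simp
next
  case False
  then have nx: "norm x > 0" using scaleR[OF x, of 0] by auto
  have ny: "norm (A x) > 0" using False by simp
  define s where "s = norm x / norm (A x)"
  have "s *\<^sub>R A x \<in> V" using maps_to[OF x] subspace by (simp add: subspace_scale)
  from polarization_bound[OF bound x this]
  have "4 * s * (norm (A x))\<^sup>2 \<le> 2 * e * ((norm x)\<^sup>2 + s\<^sup>2 * (norm (A x))\<^sup>2)"
    by (simp add: power2_norm_eq_inner power_mult_distrib)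
  then have "norm x * norm (A x) \<le> norm x * (e * norm x)"
    using ny by (simp add: s_def power2_eq_square field_simps)
  then show ?thesis using nx by simp
qed

end

locale self_adjoint_with_pvm = projection_valued_measure E
  for E :: "real set \<Rightarrow> 'h::complex_hilbert \<Rightarrow> 'h" +
  fixes T :: "'h op"
  assumes self_adjoint: "self_adjoint_op T" and spectral: "is_spectral_measure_of T E"
begin

lemma domain_iff: "x \<in> fst T \<longleftrightarrow> integrable (\<mu> x) (\<lambda>t. t\<^sup>2)"
  using spectral unfolding is_spectral_measure_of_def by blast

lemma quadratic_form: "x \<in> fst T \<Longrightarrow> inner (snd T x) x = integral\<^sup>L (\<mu> x) (\<lambda>t. t)"
  using spectral unfolding is_spectral_measure_of_def by blast

lemma subspace_domain: "subspace (fst T)"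
  using self_adjoint unfolding self_adjoint_op_def clinear_op_def csubspace_def by blast

lemma op_add: "x \<in> fst T \<Longrightarrow> y \<in> fst T \<Longrightarrow> snd T (x + y) = snd T x + snd T y"
  using self_adjoint unfolding self_adjoint_op_def clinear_op_def by blast

lemma op_scaleR: "x \<in> fst T \<Longrightarrow> snd T (r *\<^sub>R x) = r *\<^sub>R snd T x"
  using self_adjoint unfolding self_adjoint_op_def clinear_op_def by blast

lemma op_symmetric: "x \<in> fst T \<Longrightarrow> y \<in> fst T \<Longrightarrow> inner (snd T x) y = inner x (snd T y)"
  using self_adjoint unfolding self_adjoint_op_def by blast

lemma dense_domain: "closure (fst T) = UNIV"
  using self_adjoint unfolding self_adjoint_op_def by blast

lemma integrable_\<mu>_id: "x \<in> fst T \<Longrightarrow> integrable (\<mu> x) (\<lambda>t. t)"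
  unfolding domain_iff
  by (rule finite_measure.square_integrable_imp_integrable[OF finite_measure_\<mu>])
    (auto intro: borel_measurable_\<mu>)

lemma E_in_domain:
  assumes S: "S \<in> sets borel" and x: "x \<in> fst T"
  shows "E S x \<in> fst T"
proof -
  have "integrable (\<mu> x) (\<lambda>t. indicator S t *\<^sub>R t\<^sup>2)"
    using x S by (intro integrable_mult_indicator) (auto simp: domain_iff)
  then show ?thesis
    using integrable_\<mu>_E[OF S, of "\<lambda>t. t\<^sup>2" x] by (simp add: domain_iff)
qed

lemma E_bounded_in_domain:
  assumes S: "S \<in> sets borel" and bounded: "S \<subseteq> {-r..r}"
  shows "E S y \<in> fst T"
proof -
  interpret finite_measure "\<mu> y" by (rule finite_measure_\<mu>)
  have "integrable (\<mu> y) (\<lambda>t. indicator S t * t\<^sup>2)"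
  proof (rule Bochner_Integration.integrable_bound[of "\<mu> y" "\<lambda>t. r\<^sup>2"])
    show "(\<lambda>t. indicator S t * t\<^sup>2) \<in> borel_measurable (\<mu> y)"
      using S by (intro borel_measurable_\<mu>) simp
    have "t\<^sup>2 \<le> r\<^sup>2" if "t \<in> S" for t
    proof -
      have "t \<in> {-r..r}" using that bounded by blast
      then have "\<bar>t\<bar> \<le> \<bar>r\<bar>" by auto
      then show ?thesis by (simp add: abs_le_square_iff)
    qed
    then show "AE t in \<mu> y. norm (indicator S t * t\<^sup>2) \<le> norm (r\<^sup>2)"
      by (intro AE_I2) (simp split: split_indicator)
  qed simp
  then show ?thesis
    using integrable_\<mu>_E[OF S, of "\<lambda>t. t\<^sup>2" y] by (simp add: domain_iff)
qed

text \<open>The spectral subspaces reduce T. The quadratic form is additive over the orthogonal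
  splitting x + E(-I) z, so the cross term vanishes, and E(-I) T x is orthogonal to a dense set.\<close>

lemma op_preserves_E_range:
  assumes I: "I \<in> sets borel" and x: "x \<in> fst T" and Ix: "E I x = x"
  shows "E I (snd T x) = snd T x"
proof -
  have cI: "-I \<in> sets borel" using I by (rule borel_comp)
  have orth: "inner (snd T x) (E (-I) z) = 0" if z: "z \<in> fst T" for z
  proof -
    define z' where "z' = E (-I) z"
    define w where "w = x + z'"
    have z': "z' \<in> fst T" using E_in_domain[OF cI z] z'_def by simp
    have w: "w \<in> fst T" using subspace_domain x z' by (simp add: w_def subspace_add)
    have Iw: "E I w = x" and cIw: "E (-I) w = z'"
      using Ix E_add[OF I] E_Compl[OF I] E_disjoint_eq_0[OF I cI, of z] by (auto simp: w_def z'_def)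
    have iw: "integrable (\<mu> w) (\<lambda>t. t)" by (rule integrable_\<mu>_id[OF w])
    have I': "I \<in> sets (\<mu> w)" "-I \<in> sets (\<mu> w)" using I cI by simp_all
    have split: "(\<lambda>t. t) = (\<lambda>t. indicator I t * t + indicator (-I) t * t)"
      by (auto simp: fun_eq_iff split: split_indicator)
    have "integral\<^sup>L (\<mu> w) (\<lambda>t. t)
        = integral\<^sup>L (\<mu> w) (\<lambda>t. indicator I t * t) + integral\<^sup>L (\<mu> w) (\<lambda>t. indicator (-I) t * t)"
      by (subst split) (intro Bochner_Integration.integral_add integrable_mult_indicator[OF I'(1) iw, simplified]
          integrable_mult_indicator[OF I'(2) iw, simplified])
    also have "\<dots> = integral\<^sup>L (\<mu> x) (\<lambda>t. t) + integral\<^sup>L (\<mu> z') (\<lambda>t. t)"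
      using integral_\<mu>_E[OF I, of "\<lambda>t. t" w] integral_\<mu>_E[OF cI, of "\<lambda>t. t" w] Iw cIw by simp
    finally have "inner (snd T w) w = inner (snd T x) x + inner (snd T z') z'"
      using quadratic_form[OF w] quadratic_form[OF x] quadratic_form[OF z'] by simp
    moreover have "inner (snd T w) w
        = inner (snd T x) x + inner (snd T z') z' + 2 * inner (snd T x) z'"
      using op_symmetric[OF z' x]
      by (simp add: w_def op_add[OF x z'] inner_add inner_commute algebra_simps)
    ultimately show ?thesis by (simp add: z'_def)
  qed
  define v where "v = E (-I) (snd T x)"
  have "inner v z = 0" if "z \<in> fst T" for z
    using orth[OF that] E_self_adjoint[OF cI] by (simp add: v_def)
  then have "closure (fst T) \<subseteq> {z. inner v z = 0}"
    by (intro closure_minimal closed_Collect_eq continuous_intros) auto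
  then have "inner v v = 0" using dense_domain by blast
  then have "v = 0" by simp
  then show ?thesis using E_Compl[OF I, of "snd T x"] by (simp add: v_def)
qed

text \<open>On a spectral subspace of an interval of radius e around t, T - t is a symmetric
  operator whose quadratic form is bounded by e, hence so is its norm.\<close>

lemma op_near_scalar_on_E_interval:
  assumes e: "0 \<le> e" and u: "E {t-e..t+e} u = u"
  shows "u \<in> fst T \<and> norm (snd T u - t *\<^sub>R u) \<le> e * norm u"
proof -
  define I where "I = {t-e..t+e}"
  have I: "I \<in> sets borel" and cI: "-I \<in> sets borel" unfolding I_def by simp_all
  define V where "V = {u. E I u = u}"
  have V_domain: "v \<in> fst T" if "v \<in> V" for v
  proof -
    have "I \<subseteq> {-(\<bar>t\<bar> + e)..\<bar>t\<bar> + e}" unfolding I_def by auto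
    from E_bounded_in_domain[OF I this, of v] that show ?thesis by (simp add: V_def)
  qed
  define A where "A = (\<lambda>v. snd T v - t *\<^sub>R v)"
  interpret symmetric_on_subspace V A
  proof
    show "subspace V"
      unfolding subspace_def V_def using E_add[OF I] E_scaleR[OF I] E_zero[OF I] by auto
  qed (use op_preserves_E_range[OF I] V_domain op_add op_scaleR op_symmetric in
        \<open>auto simp: V_def A_def E_diff[OF I] E_scaleR[OF I] inner_diff algebra_simps\<close>)
  have "\<bar>inner (A v) v\<bar> \<le> e * (norm v)\<^sup>2" if v: "v \<in> V" for v
  proof -
    interpret finite_measure "\<mu> v" by (rule finite_measure_\<mu>)
    have iv: "integrable (\<mu> v) (\<lambda>s. s - t)"
      using integrable_\<mu>_id[OF V_domain[OF v]] by simp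
    have "AE s in \<mu> v. s \<in> I"
      using AE_\<mu>_notin[OF cI] E_Compl[OF I, of v] v by (simp add: V_def)
    then have "AE s in \<mu> v. \<bar>s - t\<bar> \<le> e" by eventually_elim (simp add: I_def abs_le_iff)
    then have "\<bar>integral\<^sup>L (\<mu> v) (\<lambda>s. s - t)\<bar> \<le> integral\<^sup>L (\<mu> v) (\<lambda>s. e)"
      by (intro integral_abs_bound_integral[THEN order_trans] integral_mono_AE) (auto intro: iv)
    moreover have "inner (A v) v = integral\<^sup>L (\<mu> v) (\<lambda>s. s - t)"
      using quadratic_form[OF V_domain[OF v]] integrable_\<mu>_id[OF V_domain[OF v]] measure_\<mu>_space[of v]
      by (simp add: A_def inner_diff power2_norm_eq_inner)
    ultimately show ?thesis using measure_\<mu>_space[of v] by (simp add: mult.commute)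
  qed
  moreover have "u \<in> V" using u by (simp add: V_def I_def)
  ultimately show ?thesis using norm_bound[OF _ e] V_domain by (simp add: A_def)
qed

lemma op_eq_0_on_E_0: "E {0} u = u \<Longrightarrow> u \<in> fst T \<and> snd T u = 0"
  using op_near_scalar_on_E_interval[of 0 0 u] by simp

lemma bounded_below_E_lessThan_eq_0:
  assumes "bounded_below_op T"
  obtains m where "m \<le> 0" "\<And>y. E {..<m} y = 0"
proof -
  obtain c where c: "\<forall>x\<in>fst T. c * (norm x)\<^sup>2 \<le> inner (snd T x) x"
    using assms unfolding bounded_below_op_def by blast
  define m where "m = min 0 (c - 1)"
  have E_slice: "E {-real k..<m} y = 0" for k y
  proof -
    define I where "I = {-real k..<m}"
    have I: "I \<in> sets borel" and cI: "-I \<in> sets borel" unfolding I_def by simp_all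
    define u where "u = E I y"
    have "I \<subseteq> {-(real k + \<bar>m\<bar>)..real k + \<bar>m\<bar>}" unfolding I_def by auto
    from E_bounded_in_domain[OF I this, of y] have u: "u \<in> fst T" by (simp add: u_def)
    interpret finite_measure "\<mu> u" by (rule finite_measure_\<mu>)
    have "AE s in \<mu> u. s \<in> I"
      using AE_\<mu>_notin[OF cI] E_disjoint_eq_0[OF cI I, of y] by (simp add: u_def)
    then have "AE s in \<mu> u. s \<le> m" by eventually_elim (simp add: I_def)
    then have "integral\<^sup>L (\<mu> u) (\<lambda>s. s) \<le> integral\<^sup>L (\<mu> u) (\<lambda>s. m)"
      by (rule integral_mono_AE[OF integrable_\<mu>_id[OF u] integrable_const])
    then have "c * (norm u)\<^sup>2 \<le> m * (norm u)\<^sup>2"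
      using c u quadratic_form[OF u] measure_\<mu>_space[of u] by (fastforce simp: mult.commute)
    moreover have "m < c" unfolding m_def by simp
    ultimately have "norm u = 0"
      by (metis mult_le_cancel_right not_le not_square_less_zero power2_eq_square zero_less_power2)
    then show ?thesis by (simp add: u_def I_def)
  qed
  have "s \<in> (\<Union>k. {-real k..<m})" if "s < m" for s
    using real_arch_simple[of "-s"] that by (auto simp: minus_le_iff)
  then have "{..<m} = (\<Union>k. {-real k..<m})" by auto
  moreover have "(\<Union>k. {-real k..<m}) \<in> null_sets (\<mu> y)" for y
    using E_slice E_eq_0_iff_null_set by (intro null_sets_UN) auto
  ultimately show ?thesis using that[of m] E_eq_0_iff_null_set by (simp add: m_def)
qed

text \<open>An approximate eigenvector for t would contradict the boundedness of the resolvent.\<close>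

lemma in_rho_E_neighbourhood_eq_0:
  assumes "in_rho_op T (complex_of_real t)"
  shows "\<exists>\<epsilon>>0. \<forall>y. E {t-\<epsilon>..t+\<epsilon>} y = 0"
proof -
  obtain B where B: "resolvent_inv T (complex_of_real t) B"
    using assms unfolding in_rho_op_def by blast
  have B_inv: "\<And>x. x \<in> fst T \<Longrightarrow> B (snd T x - t *\<^sub>R x) = x"
    using B unfolding resolvent_inv_def by (simp add: cscale_def)
  obtain K where K: "K > 0" "\<And>z. norm (B z) \<le> norm z * K"
    using bounded_linear.pos_bounded[of B] B unfolding resolvent_inv_def by blast
  define \<epsilon> where "\<epsilon> = 1 / (2 * K)"
  have \<epsilon>: "\<epsilon> > 0" using K by (simp add: \<epsilon>_def)
  have "E {t-\<epsilon>..t+\<epsilon>} y = 0" for y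
  proof -
    define u where "u = E {t-\<epsilon>..t+\<epsilon>} y"
    have "E {t-\<epsilon>..t+\<epsilon>} u = u" unfolding u_def by (simp add: E_idem)
    from op_near_scalar_on_E_interval[OF less_imp_le[OF \<epsilon>] this]
    have u: "u \<in> fst T" and approx: "norm (snd T u - t *\<^sub>R u) \<le> \<epsilon> * norm u" by auto
    have "norm u \<le> norm (snd T u - t *\<^sub>R u) * K" using K(2) B_inv[OF u] by metis
    also have "\<dots> \<le> \<epsilon> * norm u * K" using approx K by (simp add: mult_right_mono)
    also have "\<dots> = norm u / 2" using K by (simp add: \<epsilon>_def field_simps)
    finally show ?thesis by (simp add: u_def)
  qed
  then show ?thesis using \<epsilon> by blast
qed

lemma in_rho_interval_E_eq_0:
  assumes "\<forall>t\<in>{0<..<\<delta>}. in_rho_op T (complex_of_real t)"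
  shows "E {0<..<\<delta>} y = 0"
proof -
  define F where "F = {U::real set. open U \<and> U \<in> null_sets (\<mu> y)}"
  obtain F' where F': "F' \<subseteq> F" "countable F'" "\<Union>F' = \<Union>F"
    using Lindelof[of F] unfolding F_def by blast
  have "{0<..<\<delta>} \<subseteq> \<Union>F"
  proof
    fix t assume "t \<in> {0<..<\<delta>}"
    then obtain \<epsilon> where \<epsilon>: "\<epsilon> > 0" "\<forall>y. E {t-\<epsilon>..t+\<epsilon>} y = 0"
      using in_rho_E_neighbourhood_eq_0 assms by blast
    then have "{t-\<epsilon><..<t+\<epsilon>} \<in> null_sets (\<mu> y)"
      using E_eq_0_iff_null_set[of "{t-\<epsilon>..t+\<epsilon>}"] by (auto intro: null_sets_subset)
    then show "t \<in> \<Union>F" using \<epsilon>(1) unfolding F_def by (intro UnionI[of "{t-\<epsilon><..<t+\<epsilon>}"]) auto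
  qed
  moreover have "\<Union>F' \<in> null_sets (\<mu> y)"
    using null_sets_UN'[OF F'(2), of "\<lambda>U. U"] F'(1) unfolding F_def by auto
  ultimately have "{0<..<\<delta>} \<in> null_sets (\<mu> y)"
    using F'(3) by (auto intro: null_sets_subset)
  then show ?thesis using E_eq_0_iff_null_set[of "{0<..<\<delta>}"] by simp
qed

lemma finite_rank_E_0:
  assumes "in_rho_op T 0 \<or> fredholm_op T"
  obtains F where "finite F" "range (E {0}) \<subseteq> span F"
proof -
  have "\<exists>F. finite F \<and> {x\<in>fst T. snd T x = 0} \<subseteq> span F"
  proof (cases "in_rho_op T 0")
    case True
    then obtain B where B: "resolvent_inv T 0 B" unfolding in_rho_op_def by blast
    then have "x = 0" if "x \<in> fst T" "snd T x = 0" for x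
      using that linear_simps(3)[of B] unfolding resolvent_inv_def by (auto simp: cscale_def)
    then show ?thesis by (intro exI[of _ "{}"]) auto
  next
    case False
    then show ?thesis using assms unfolding fredholm_op_def by blast
  qed
  moreover have "range (E {0}) \<subseteq> {x\<in>fst T. snd T x = 0}"
    using op_eq_0_on_E_0 E_idem[of "{0}"] by auto
  ultimately show ?thesis using that by blast
qed

end

section \<open>Compactness and distance in normed spaces\<close>

lemma compact_bounded_coefficient_combinations:
  fixes U :: "'a::real_normed_vector set"
  assumes "finite U"
  shows "compact {(\<Sum>c\<in>U. a c *\<^sub>R c) | a. \<forall>c\<in>U. \<bar>a c\<bar> \<le> M}"
  using assms
proof (induction U rule: finite_induct)
  case empty
  then show ?case by simp
next
  case (insert e U)
  let ?C = "\<lambda>U. {(\<Sum>c\<in>U. a c *\<^sub>R c) | a. \<forall>c\<in>U. \<bar>a c\<bar> \<le> M}"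
  have "?C (insert e U) = {x + y | x y. x \<in> (\<lambda>t. t *\<^sub>R e) ` {-M..M} \<and> y \<in> ?C U}"
  proof (intro set_eqI iffI)
    fix z assume "z \<in> ?C (insert e U)"
    then obtain a where "z = a e *\<^sub>R e + (\<Sum>c\<in>U. a c *\<^sub>R c)" "\<forall>c\<in>insert e U. \<bar>a c\<bar> \<le> M"
      using insert by auto
    then show "z \<in> {x + y | x y. x \<in> (\<lambda>t. t *\<^sub>R e) ` {-M..M} \<and> y \<in> ?C U}" by fastforce
  next
    fix z assume "z \<in> {x + y | x y. x \<in> (\<lambda>t. t *\<^sub>R e) ` {-M..M} \<and> y \<in> ?C U}"
    then obtain t a where z: "z = t *\<^sub>R e + (\<Sum>c\<in>U. a c *\<^sub>R c)" "t \<in> {-M..M}" "\<forall>c\<in>U. \<bar>a c\<bar> \<le> M"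
      by blast
    have "(\<Sum>c\<in>U. (a(e := t)) c *\<^sub>R c) = (\<Sum>c\<in>U. a c *\<^sub>R c)"
      using insert(2) by (intro sum.cong) auto
    then have "z = (\<Sum>c\<in>insert e U. (a(e := t)) c *\<^sub>R c)" using z(1) insert by simp
    moreover have "\<forall>c\<in>insert e U. \<bar>(a(e := t)) c\<bar> \<le> M" using z(2,3) by auto
    ultimately show "z \<in> ?C (insert e U)" by blast
  qed
  moreover have "compact ((\<lambda>t. t *\<^sub>R e) ` {-M..M})"
    by (intro compact_continuous_image continuous_intros) simp
  ultimately show ?case by (simp only:) (intro compact_sums insert.IH)
qed

text \<open>Coordinates with respect to an orthogonal basis are bounded by the norm, so a bounded
  subset of a finite-dimensional span lies in a compact set of bounded-coefficient combinations.\<close>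

lemma compact_closed_bounded_subset_span:
  fixes F :: "'a::real_inner set"
  assumes F: "finite F" and K: "K \<subseteq> span F" "closed K" "bounded K"
  shows "compact K"
proof -
  obtain C where C: "finite C" "span C = span F" "pairwise orthogonal C"
    using basis_orthogonal[OF F] by blast
  define C0 where "C0 = C - {0}"
  have C0: "finite C0" "span C0 = span F" "pairwise orthogonal C0" "0 \<notin> C0"
    using C unfolding C0_def by (auto simp: pairwise_def)
  obtain R where R: "\<forall>k\<in>K. norm k \<le> R" using K(3) bounded_iff by blast
  define M where "M = R * (\<Sum>c\<in>C0. 1 / norm c)"
  have "K \<subseteq> {(\<Sum>c\<in>C0. a c *\<^sub>R c) | a. \<forall>c\<in>C0. \<bar>a c\<bar> \<le> M}"
  proof
    fix k assume k: "k \<in> K"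
    then have "k \<in> span C0" using K(1) C0(2) by auto
    then obtain a where a: "k = (\<Sum>c\<in>C0. a c *\<^sub>R c)"
      using span_finite[OF C0(1)] by auto
    have "\<bar>a c\<bar> \<le> M" if c: "c \<in> C0" for c
    proof -
      have nc: "norm c > 0" using C0(4) c by auto
      have "inner k c = (\<Sum>d\<in>C0. a d * inner d c)"
        unfolding a by (simp add: inner_sum_left)
      also have "\<dots> = a c * inner c c"
        using C0(1,3) c unfolding pairwise_def orthogonal_def
        by (subst sum.remove[OF C0(1) c]) (auto intro!: sum.neutral)
      finally have "\<bar>a c\<bar> * norm c * norm c \<le> norm k * norm c"
        using Cauchy_Schwarz_ineq2[of k c]
        by (simp add: abs_mult power2_norm_eq_inner[symmetric] power2_eq_square)
      then have "\<bar>a c\<bar> \<le> norm k * (1 / norm c)"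
        using nc by (simp add: field_simps)
      also have "\<dots> \<le> R * (\<Sum>c\<in>C0. 1 / norm c)"
        using R k c C0(1) by (intro mult_mono member_le_sum) (auto intro: order_trans[OF norm_ge_zero])
      finally show ?thesis by (simp add: M_def)
    qed
    then show "k \<in> {(\<Sum>c\<in>C0. a c *\<^sub>R c) | a. \<forall>c\<in>C0. \<bar>a c\<bar> \<le> M}"
      using a by blast
  qed
  then have "K = {(\<Sum>c\<in>C0. a c *\<^sub>R c) | a. \<forall>c\<in>C0. \<bar>a c\<bar> \<le> M} \<inter> K" by blast
  also have "compact \<dots>"
    by (intro compact_Int_closed compact_bounded_coefficient_combinations C0(1) K(2))
  finally show ?thesis .
qed

lemma compact_closed_infdist_pos:
  fixes K H :: "'a::metric_space set"
  assumes "compact K" "closed H" "H \<noteq> {}" "K \<inter> H = {}"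
  obtains d where "d > 0" "\<And>k. k \<in> K \<Longrightarrow> d \<le> infdist k H"
proof (cases "K = {}")
  case True
  then show ?thesis using that[of 1] by simp
next
  case False
  have "continuous_on K (\<lambda>k. infdist k H)" by (intro continuous_on_infdist continuous_on_id)
  then obtain k0 where "k0 \<in> K" "\<forall>k\<in>K. infdist k0 H \<le> infdist k H"
    using continuous_attains_inf[OF assms(1) False] by blast
  moreover have "infdist k0 H > 0"
    using \<open>k0 \<in> K\<close> assms(2-4) infdist_pos_not_in_closed by blast
  ultimately show ?thesis using that by blast
qed

lemma norm_le_dist_of_sphere_separated:
  fixes H V :: "'a::real_normed_vector set"
  assumes H: "subspace H" and V: "subspace V" and d: "d > 0"
    and sep: "\<And>k. k \<in> V \<Longrightarrow> norm k = 1 \<Longrightarrow> d \<le> infdist k H"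
    and x: "x \<in> H" and p: "p \<in> V"
  shows "d * norm x \<le> (1 + d) * norm (x - p)"
proof (cases "p = 0")
  case True
  then show ?thesis using d by (simp add: mult_right_mono)
next
  case False
  then have np: "norm p > 0" by simp
  have "(1 / norm p) *\<^sub>R p \<in> V" and x': "(1 / norm p) *\<^sub>R x \<in> H"
    using V H p x by (simp_all add: subspace_scale)
  then have "d \<le> infdist ((1 / norm p) *\<^sub>R p) H"
    using sep np by simp
  also have "\<dots> \<le> dist ((1 / norm p) *\<^sub>R p) ((1 / norm p) *\<^sub>R x)"
    by (rule infdist_le[OF x'])
  also have "\<dots> = norm (x - p) / norm p"
    using np by (simp add: dist_norm norm_minus_commute flip: scaleR_diff_right)
  finally have "d * norm p \<le> norm (x - p)" using np by (simp add: field_simps)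
  moreover have "d * norm x \<le> d * (norm p + norm (x - p))"
    using d norm_triangle_ineq[of p "x - p"] by (intro mult_left_mono) auto
  ultimately show ?thesis by (simp add: algebra_simps)
qed

section \<open>Subspaces on which the form is negative\<close>

locale negative_subspace = projection_valued_measure E
  for E :: "real set \<Rightarrow> 'h::complex_hilbert \<Rightarrow> 'h" +
  fixes H :: "'h set" and m \<delta> :: real
  assumes subspace_H: "subspace H" and closed_H: "closed H" and H_form_dom: "H \<subseteq> form_dom E"
    and form_neg: "\<And>x. x \<in> H \<Longrightarrow> x \<noteq> 0 \<Longrightarrow> form_val E x < 0"
    and lower: "m \<le> 0" "\<And>y. E {..<m} y = 0"
    and gap: "\<delta> > 0" "\<And>y. E {0<..<\<delta>} y = 0"
    and finite_rank_E_0: "\<exists>F. finite F \<and> range (E {0}) \<subseteq> span F"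
begin

text \<open>Off the null set (-\<infinity>,m) \<union> (0,\<delta>) the identity dominates the step function g.\<close>

lemma form_val_lower_bound:
  assumes x: "x \<in> form_dom E"
  shows "m * (norm (E {..<0} x))\<^sup>2 + \<delta> * (norm (E {0<..} x))\<^sup>2 \<le> form_val E x"
proof -
  interpret finite_measure "\<mu> x" by (rule finite_measure_\<mu>)
  define g where "g = (\<lambda>t::real. m * indicator {..<0} t + \<delta> * indicator {0<..} t)"
  have ind: "integrable (\<mu> x) (indicator {..<(0::real)} :: real \<Rightarrow> real)"
    "integrable (\<mu> x) (indicator {(0::real)<..} :: real \<Rightarrow> real)"
    by (simp_all add: emeasure_\<mu>)
  have "integral\<^sup>L (\<mu> x) g = m * (norm (E {..<0} x))\<^sup>2 + \<delta> * (norm (E {0<..} x))\<^sup>2"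
    using ind by (simp add: g_def measure_\<mu>)
  moreover have "AE t in \<mu> x. t \<notin> {..<m}" "AE t in \<mu> x. t \<notin> {0<..<\<delta>}"
    using lower(2) gap(2) by (intro AE_\<mu>_notin; simp)+
  then have "AE t in \<mu> x. g t \<le> t"
  proof eventually_elim
    case (elim t)
    then show ?case using lower(1) gap(1) by (auto simp: g_def not_less split: split_indicator)
  qed
  then have "integral\<^sup>L (\<mu> x) g \<le> integral\<^sup>L (\<mu> x) (\<lambda>t. t)"
    using x ind by (intro integral_mono_AE) (auto simp: g_def form_dom_def)
  ultimately show ?thesis by (simp add: form_val_def)
qed

lemma H_inter_range_E:
  assumes S: "S \<in> sets borel" "S \<inter> {..<0} = {}"
  shows "H \<inter> range (E S) = {0}"
proof -
  have "x = 0" if x: "x \<in> H" "x = E S y" for x y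
  proof -
    have "E {..<0} x = 0" using E_disjoint_eq_0[of "{..<0}" S y] S x(2) by auto
    moreover have "0 \<le> \<delta> * (norm (E {0<..} x))\<^sup>2" using gap(1) by simp
    ultimately have "0 \<le> form_val E x"
      using form_val_lower_bound[of x] x(1) H_form_dom by auto
    then show ?thesis using form_neg x(1) by force
  qed
  moreover have "0 \<in> H \<inter> range (E S)" using subspace_H E_zero[OF S(1)] by (auto simp: subspace_0)
  ultimately show ?thesis by blast
qed

lemma unit_sphere_E_0_separated:
  obtains d where "d > 0" "\<And>k. E {0} k = k \<Longrightarrow> norm k = 1 \<Longrightarrow> d \<le> infdist k H"
proof -
  define K where "K = {k. E {0} k = k \<and> norm k = 1}"
  obtain F where F: "finite F" "range (E {0}) \<subseteq> span F" using finite_rank_E_0 by blast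
  have "compact K"
  proof (rule compact_closed_bounded_subset_span[OF F(1)])
    show "K \<subseteq> span F"
    proof
      fix k assume "k \<in> K"
      then have "k \<in> range (E {0})" unfolding K_def by (metis (mono_tags) mem_Collect_eq rangeI)
      then show "k \<in> span F" using F(2) by blast
    qed
    show "closed K" unfolding K_def
      by (intro closed_Collect_conj closed_Collect_eq continuous_on_id continuous_on_norm
          continuous_on_const linear_continuous_on[OF E_bounded_linear]) simp
    show "bounded K" unfolding K_def bounded_iff by auto
  qed
  moreover have "k \<notin> H" if "k \<in> K" for k
    using form_neg[of k] form_val_E_0[of k] that by (fastforce simp: K_def)
  moreover have "H \<noteq> {}" using subspace_H subspace_0 by blast
  ultimately obtain d where "d > 0" "\<And>k. k \<in> K \<Longrightarrow> d \<le> infdist k H"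
    using compact_closed_infdist_pos[OF _ closed_H] by blast
  then show ?thesis using that unfolding K_def by blast
qed

text \<open>On H the form is negative, so the part of x in (0,\<infinity>) is controlled by the part in
  (-\<infinity>,0); the kernel part is controlled by the distance of the finite-dimensional
  kernel sphere to H.\<close>

lemma norm_E_lessThan_0_lower_bound:
  obtains c where "c > 0" "\<And>x. x \<in> H \<Longrightarrow> c * norm x \<le> norm (E {..<0} x)"
proof -
  obtain d where d: "d > 0" "\<And>k. E {0} k = k \<Longrightarrow> norm k = 1 \<Longrightarrow> d \<le> infdist k H"
    using unit_sphere_E_0_separated by blast
  define C where "C = 1 - m / \<delta>"
  have C: "C \<ge> 1" unfolding C_def using lower(1) gap(1) by (simp add: divide_nonpos_pos)
  have V: "subspace {k. E {0} k = k}"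
    unfolding subspace_def using E_add E_scaleR E_zero by simp
  have "d / ((1 + d) * C) * norm x \<le> norm (E {..<0} x)" if x: "x \<in> H" for x
  proof -
    define a where "a = norm (E {..<0} x)"
    define w where "w = norm (E {0<..} x)"
    define e where "e = norm (x - E {0} x)"
    have "m * a\<^sup>2 + \<delta> * w\<^sup>2 \<le> 0"
    proof (cases "x = 0")
      case True
      then show ?thesis by (simp add: a_def w_def E_zero)
    next
      case False
      have "x \<in> form_dom E" using x H_form_dom by blast
      from form_val_lower_bound[OF this] form_neg[OF x False] show ?thesis
        unfolding a_def w_def by linarith
    qed
    then have "w\<^sup>2 * \<delta> \<le> - m * a\<^sup>2" by (simp add: mult.commute)
    then have "w\<^sup>2 \<le> (- m * a\<^sup>2) / \<delta>" using gap(1) by (simp only: pos_le_divide_eq)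
    moreover have "e\<^sup>2 = a\<^sup>2 + w\<^sup>2" unfolding e_def a_def w_def by (rule norm_diff_E_0_sq)
    moreover have "C * a\<^sup>2 = a\<^sup>2 + (- m * a\<^sup>2) / \<delta>" by (simp add: C_def left_diff_distrib)
    ultimately have "e\<^sup>2 \<le> C * a\<^sup>2" by linarith
    also have "\<dots> \<le> C * (C * a\<^sup>2)" using mult_right_mono[OF C, of "C * a\<^sup>2"] C by simp
    also have "\<dots> = (C * a)\<^sup>2" by (simp add: power2_eq_square)
    finally have "e\<^sup>2 \<le> (C * a)\<^sup>2" .
    moreover have "0 \<le> C * a" using C by (simp add: a_def)
    ultimately have "e \<le> C * a" by (rule power2_le_imp_le)
    have "d * norm x \<le> (1 + d) * e"
      unfolding e_def
      by (rule norm_le_dist_of_sphere_separated[OF subspace_H V d(1) _ x]) (auto simp: d(2) E_idem)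
    also have "\<dots> \<le> (1 + d) * (C * a)"
      using \<open>e \<le> C * a\<close> d(1) by (intro mult_left_mono) auto
    also have "\<dots> = a * ((1 + d) * C)" by simp
    finally have "d * norm x / ((1 + d) * C) \<le> a"
      using d(1) C by (subst pos_divide_le_eq) auto
    then show ?thesis by (simp add: a_def)
  qed
  moreover have "d / ((1 + d) * C) > 0" using d(1) C by simp
  ultimately show ?thesis using that by blast
qed

lemma closed_sum_H_range_E:
  assumes S: "S \<in> sets borel" "S \<inter> {..<0} = {}"
  shows "closed {x + y |x y. x \<in> H \<and> y \<in> range (E S)}"
proof -
  obtain c where c: "c > 0" "\<And>x. x \<in> H \<Longrightarrow> c * norm x \<le> norm (E {..<0} x)"
    using norm_E_lessThan_0_lower_bound by blast
  have "{..<0} \<inter> -S = {..<0}" using S(2) by blast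
  then have "E {..<0} x = E {..<0} (E (-S) x)" for x
    using E_Int[of "{..<0}" "-S" x] S(1) by simp
  then have "norm (E {..<0} x) \<le> norm (E (-S) x)" for x
    using norm_E_le[of "{..<0}" "E (-S) x"] by simp
  then show ?thesis
    using c by (intro closed_sum_range_E S(1) subspace_H closed_H) (auto intro: order_trans)
qed

end

section \<open>Operator functions\<close>

lemma sign_crossing_nonpos_imp_neg:
  fixes f :: "real \<Rightarrow> real"
  assumes cont: "continuous_on {\<alpha>..\<beta>} f"
    and crossing: "\<forall>l0\<in>{\<alpha>..\<beta>}. f l0 = 0 \<longrightarrow>
      (\<forall>l\<in>{\<alpha>..\<beta>}. l < l0 \<longrightarrow> f l > 0) \<and> (\<forall>l\<in>{\<alpha>..\<beta>}. l > l0 \<longrightarrow> f l < 0)"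
    and ab: "a \<in> {\<alpha>..\<beta>}" "b \<in> {\<alpha>..\<beta>}" "a < b" and fa: "f a \<le> 0"
  shows "f b < 0"
proof (rule ccontr)
  assume "\<not> f b < 0"
  moreover have "continuous_on {a..b} f"
    using cont ab by (auto intro: continuous_on_subset)
  ultimately obtain l where l: "a \<le> l" "l \<le> b" "f l = 0"
    using IVT'[of f a 0 b] fa ab(3) by auto
  then have "l \<in> {\<alpha>..\<beta>}" using ab by auto
  show False
  proof (cases "l < b")
    case True
    then show False using crossing \<open>l \<in> {\<alpha>..\<beta>}\<close> l(3) ab(2) \<open>\<not> f b < 0\<close> by blast
  next
    case False
    then have "a < l" using l ab(3) by simp
    then show False using crossing \<open>l \<in> {\<alpha>..\<beta>}\<close> l(3) ab(1) fa by fastforce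
  qed
qed

lemma opf_rho_or_fredholm:
  assumes "\<alpha> \<in> opf_rho T {\<alpha>..\<beta>}" "\<beta> \<in> opf_rho T {\<alpha>..\<beta>}"
    and "opf_spectrum T {\<alpha>..\<beta>} \<inter> {\<alpha><..<\<beta>} \<subseteq> opf_dis T {\<alpha>..\<beta>}"
    and "l \<in> {\<alpha>..\<beta>}"
  shows "in_rho_op (T l) 0 \<or> fredholm_op (T l)"
proof (cases "l = \<alpha> \<or> l = \<beta>")
  case True
  then show ?thesis using assms(1,2) unfolding opf_rho_def by auto
next
  case False
  then have "l \<in> {\<alpha><..<\<beta>}" using assms(4) by auto
  then show ?thesis
    using assms(3,4) unfolding opf_spectrum_def opf_dis_def opf_ess_def by blast
qed

theorem lemma4p4:
  fixes T :: "real \<Rightarrow> 'h::complex_hilbert op"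
    and E :: "real \<Rightarrow> real set \<Rightarrow> 'h \<Rightarrow> 'h"
    and \<D> H1 :: "'h set"
    and \<alpha> \<beta> a b \<delta> :: real
  assumes "\<alpha> < \<beta>"
    and A1: "\<forall>l\<in>{\<alpha>..\<beta>}. self_adjoint_op (T l) \<and> is_spectral_measure_of (T l) (E l)"
    and A2: "\<forall>l\<in>{\<alpha>..\<beta>}. form_dom (E l) = \<D>"
    and A3: "\<forall>x\<in>\<D> - {0}. continuous_on {\<alpha>..\<beta>} (\<lambda>l. form_val (E l) x) \<and>
              (\<forall>l0\<in>{\<alpha>..\<beta>}. form_val (E l0) x = 0 \<longrightarrow>
                 (\<forall>l\<in>{\<alpha>..\<beta>}. l < l0 \<longrightarrow> form_val (E l) x > 0) \<and>
                 (\<forall>l\<in>{\<alpha>..\<beta>}. l > l0 \<longrightarrow> form_val (E l) x < 0))"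
    and "norm_resolvent_continuous T {\<alpha>..\<beta>}"
    and "\<forall>l\<in>{\<alpha>..\<beta>}. bounded_below_op (T l)"
    and "\<alpha> \<in> opf_rho T {\<alpha>..\<beta>}" and "\<beta> \<in> opf_rho T {\<alpha>..\<beta>}"
    and "finite (opf_spectrum T {\<alpha>..\<beta>} \<inter> {\<alpha><..<\<beta>})"
    and "opf_spectrum T {\<alpha>..\<beta>} \<inter> {\<alpha><..<\<beta>} \<subseteq> opf_dis T {\<alpha>..\<beta>}"
    and "a \<in> {\<alpha>..\<beta>}" and "b \<in> {\<alpha>..\<beta>}" and "a < b"
    and "csubspace H1" and "closed H1" and "H1 \<subseteq> \<D>"
    and "\<forall>x\<in>H1. form_val (E a) x \<le> 0"
    and "\<delta> > 0" and "\<forall>t\<in>{0<..<\<delta>}. in_rho_op (T b) (complex_of_real t)"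
  shows "H1 \<inter> spec_subspace (E b) {0<..} = {0} \<and>
         closed {x + y |x y. x \<in> H1 \<and> y \<in> spec_subspace (E b) {0<..}} \<and>
         H1 \<inter> spec_subspace (E b) {0..} = {0} \<and>
         closed {x + y |x y. x \<in> H1 \<and> y \<in> spec_subspace (E b) {0..}}"
proof -
  have b: "b \<in> {\<alpha>..\<beta>}" by (rule assms(12))
  then interpret self_adjoint_with_pvm "E b" "T b"
    using A1 by unfold_locales (auto simp: is_spectral_measure_of_def)
  obtain m where m: "m \<le> 0" "\<And>y. E b {..<m} y = 0"
    using bounded_below_E_lessThan_eq_0 assms(6) b by blast
  obtain F where "finite F" "range (E b {0}) \<subseteq> span F"
    using finite_rank_E_0 opf_rho_or_fredholm[OF assms(7,8,10) b] by blast
  have "form_val (E b) x < 0" if "x \<in> H1" "x \<noteq> 0" for x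
    using A3 that assms(11,13,16,17) b
    by (intro sign_crossing_nonpos_imp_neg[of \<alpha> \<beta> "\<lambda>l. form_val (E l) x" a b]) auto
  then interpret negative_subspace "E b" H1 m \<delta>
    using assms(14-16,18,19) A2 b m \<open>finite F\<close> \<open>range (E b {0}) \<subseteq> span F\<close>
    by unfold_locales (auto simp: csubspace_def in_rho_interval_E_eq_0)
  have "{0<..} \<inter> {..<0::real} = {}" "{0..} \<inter> {..<0::real} = {}" by auto
  then show ?thesis
    unfolding spec_subspace_def using H_inter_range_E closed_sum_H_range_E by simp
qed

end
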